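(* A graph $G=(V,E)$ is $(1,1)$-well-covered if and only if there is a positive integer $k$ and a partition $V=(S,K)$ with $S$ an independent set, $K$ a clique and $|K|=k$, such that the degree sequence of $G$ (listing first the $k$ vertices of $K$ and then the vertices of $S$) is either $(k,k,\ldots,k,i_1,i_2,\ldots,i_s,0,0,\ldots,0)$ with $\sum_{j=1}^s i_j = k$, or $(k-1,k-1,\ldots,k-1,0,0,\ldots,0)$, where the initial blocks $k,\ldots,k$ (resp. $k-1,\ldots,k-1$) have length $k$.
   Context: A $(1,1)$-partition of $G$ is a partition of $V(G)$ into an independent set and a clique. A graph is well-covered if all its maximal independent sets have the same cardinality; it is $(1,1)$-well-covered if it admits a $(1,1)$-partition and is well-covered. *)

theory Defs
  imports Main
begin

definition simple_graph :: "'a set \<Rightarrow> ('a \<Rightarrow> 'a \<Rightarrow> bool) \<Rightarrow> bool" where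
  "simple_graph V E \<longleftrightarrow> finite V \<and> (\<forall>x y. E x y \<longrightarrow> x \<in> V \<and> y \<in> V)
     \<and> (\<forall>x y. E x y \<longrightarrow> E y x) \<and> (\<forall>x. \<not> E x x)"

definition independent_set :: "'a set \<Rightarrow> ('a \<Rightarrow> 'a \<Rightarrow> bool) \<Rightarrow> 'a set \<Rightarrow> bool" where
  "independent_set V E S \<longleftrightarrow> S \<subseteq> V \<and> (\<forall>x\<in>S. \<forall>y\<in>S. \<not> E x y)"

definition clique :: "'a set \<Rightarrow> ('a \<Rightarrow> 'a \<Rightarrow> bool) \<Rightarrow> 'a set \<Rightarrow> bool" where
  "clique V E K \<longleftrightarrow> K \<subseteq> V \<and> (\<forall>x\<in>K. \<forall>y\<in>K. x \<noteq> y \<longrightarrow> E x y)"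

definition maximal_independent_set :: "'a set \<Rightarrow> ('a \<Rightarrow> 'a \<Rightarrow> bool) \<Rightarrow> 'a set \<Rightarrow> bool" where
  "maximal_independent_set V E S \<longleftrightarrow> independent_set V E S \<and>
     (\<forall>T. independent_set V E T \<and> S \<subseteq> T \<longrightarrow> T = S)"

definition well_covered :: "'a set \<Rightarrow> ('a \<Rightarrow> 'a \<Rightarrow> bool) \<Rightarrow> bool" where
  "well_covered V E \<longleftrightarrow> (\<forall>S T. maximal_independent_set V E S \<and> maximal_independent_set V E T
     \<longrightarrow> card S = card T)"

definition partition_11 :: "'a set \<Rightarrow> ('a \<Rightarrow> 'a \<Rightarrow> bool) \<Rightarrow> 'a set \<Rightarrow> 'a set \<Rightarrow> bool" where
  "partition_11 V E S K \<longleftrightarrow> S \<inter> K = {} \<and> S \<union> K = V \<and> independent_set V E S \<and> clique V E K"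

definition has_11_partition :: "'a set \<Rightarrow> ('a \<Rightarrow> 'a \<Rightarrow> bool) \<Rightarrow> bool" where
  "has_11_partition V E \<longleftrightarrow> (\<exists>S K. partition_11 V E S K)"

definition well_covered_11 :: "'a set \<Rightarrow> ('a \<Rightarrow> 'a \<Rightarrow> bool) \<Rightarrow> bool" where
  "well_covered_11 V E \<longleftrightarrow> has_11_partition V E \<and> well_covered V E"

definition degree :: "'a set \<Rightarrow> ('a \<Rightarrow> 'a \<Rightarrow> bool) \<Rightarrow> 'a \<Rightarrow> nat" where
  "degree V E v = card {u \<in> V. E v u}"

end

theory Submission
  imports Defs
begin

text \<open>Let (S, K) be a (1,1)-partition with K nonempty, and write N(v) for the neighbours in S of
  a clique vertex v. A maximal independent set meets K in at most one vertex, so it is either S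
  itself (which is maximal iff every N(v) is nonempty) or T(v) = {v} \<union> (S - N(v)), of size
  |S| + 1 - |N(v)|. Hence all maximal independent sets have the same size iff either every
  |N(v)| is 1 or every N(v) is empty, and since deg v = |K| - 1 + |N(v)| on K while the degrees
  on S sum to \<Sum> |N(v)|, these are exactly the two degree sequences of the statement.\<close>

definition neighbours_in :: "('a \<Rightarrow> 'a \<Rightarrow> bool) \<Rightarrow> 'a set \<Rightarrow> 'a \<Rightarrow> 'a set" where
  "neighbours_in E A v = {u \<in> A. E v u}"

lemma partition_11_nonempty_clique:
  assumes "partition_11 V E S K" and "V \<noteq> {}"
  obtains S' K' where "partition_11 V E S' K'" and "K' \<noteq> {}"
proof (cases "K = {}")
  case True
  with assms obtain a where "a \<in> S" and "S = V"
    unfolding partition_11_def by auto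
  with assms(1) have "partition_11 V E (S - {a}) {a}"
    unfolding partition_11_def independent_set_def clique_def by auto
  then show ?thesis using that by blast
qed (use assms that in blast)

locale split_graph =
  fixes V :: "'a set" and E :: "'a \<Rightarrow> 'a \<Rightarrow> bool" and S K :: "'a set"
  assumes graph: "simple_graph V E" and partition: "partition_11 V E S K"
begin

abbreviation N :: "'a \<Rightarrow> 'a set" where
  "N \<equiv> neighbours_in E S"

lemma E_sym: "E x y \<longleftrightarrow> E y x"
  using graph unfolding simple_graph_def by blast

lemma E_irrefl: "\<not> E x x"
  using graph unfolding simple_graph_def by blast

lemma V_eq: "V = S \<union> K" and disjoint: "S \<inter> K = {}"
  using partition unfolding partition_11_def by auto

lemma independent_S: "independent_set V E S"
  using partition unfolding partition_11_def by blast

lemma S_no_edge: "x \<in> S \<Longrightarrow> y \<in> S \<Longrightarrow> \<not> E x y"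
  using independent_S unfolding independent_set_def by blast

lemma K_edge: "x \<in> K \<Longrightarrow> y \<in> K \<Longrightarrow> x \<noteq> y \<Longrightarrow> E x y"
  using partition unfolding partition_11_def clique_def by blast

lemma finite_S: "finite S" and finite_K: "finite K"
  using graph V_eq unfolding simple_graph_def by auto

lemma degree_clique:
  assumes "v \<in> K"
  shows "degree V E v = card K - 1 + card (N v)"
proof -
  have "{u \<in> V. E v u} = (K - {v}) \<union> N v"
    using assms V_eq K_edge E_irrefl by (auto simp: neighbours_in_def)
  moreover have "(K - {v}) \<inter> N v = {}"
    using disjoint by (auto simp: neighbours_in_def)
  ultimately show ?thesis
    using assms finite_S finite_K
    by (simp add: degree_def card_Un_disjoint neighbours_in_def)
qed

lemma degree_independent:
  assumes "s \<in> S"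
  shows "degree V E s = card (neighbours_in E K s)"
proof -
  have "{u \<in> V. E s u} = neighbours_in E K s"
    using assms V_eq S_no_edge by (auto simp: neighbours_in_def)
  then show ?thesis by (simp add: degree_def)
qed

lemma sum_degree_independent: "(\<Sum>s\<in>S. degree V E s) = (\<Sum>v\<in>K. card (N v))"
proof -
  have "(\<Sum>s\<in>S. degree V E s) = (\<Sum>s\<in>S. \<Sum>v\<in>K. if E s v then 1 else 0)"
    using finite_K by (simp add: degree_independent neighbours_in_def sum.inter_filter[symmetric])
  also have "\<dots> = (\<Sum>v\<in>K. \<Sum>s\<in>S. if E v s then 1 else 0)"
    by (subst sum.swap) (simp add: E_sym)
  also have "\<dots> = (\<Sum>v\<in>K. card (N v))"
    using finite_S by (simp add: neighbours_in_def sum.inter_filter[symmetric])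
  finally show ?thesis .
qed

lemma card_insert_clique_vertex:
  assumes "v \<in> K"
  shows "card (insert v (S - N v)) + card (N v) = card S + 1"
proof -
  have "N v \<subseteq> S" by (auto simp: neighbours_in_def)
  moreover have "v \<notin> S" using assms disjoint by blast
  ultimately show ?thesis
    using finite_S card_Diff_subset[of "N v" S] card_mono[of S "N v"]
    by (simp add: finite_subset)
qed

lemma independent_insert_clique_vertex:
  assumes "v \<in> K"
  shows "independent_set V E (insert v (S - N v))"
  using assms V_eq S_no_edge E_irrefl E_sym
  unfolding independent_set_def neighbours_in_def by auto

lemma independent_subset_insert_clique_vertex:
  assumes "independent_set V E I" and "v \<in> I" and "v \<in> K"
  shows "I \<subseteq> insert v (S - N v)"
  using assms V_eq K_edge unfolding independent_set_def neighbours_in_def by blast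

lemma maximal_insert_clique_vertex:
  assumes "v \<in> K"
  shows "maximal_independent_set V E (insert v (S - N v))"
  unfolding maximal_independent_set_def
  using assms independent_insert_clique_vertex independent_subset_insert_clique_vertex
  by blast

lemma maximal_independent_set_cases:
  assumes "maximal_independent_set V E I"
  shows "I = S \<or> (\<exists>v\<in>K. I = insert v (S - N v))"
proof (cases "I \<inter> K = {}")
  case True
  with assms V_eq have "I \<subseteq> S"
    unfolding maximal_independent_set_def independent_set_def by blast
  then show ?thesis
    using assms independent_S unfolding maximal_independent_set_def by blast
next
  case False
  then obtain v where "v \<in> I" "v \<in> K" by blast
  with assms show ?thesis
    using independent_subset_insert_clique_vertex independent_insert_clique_vertex
    unfolding maximal_independent_set_def by blast
qed

lemma maximal_S_iff: "maximal_independent_set V E S \<longleftrightarrow> (\<forall>v\<in>K. N v \<noteq> {})"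
proof
  assume "maximal_independent_set V E S"
  then show "\<forall>v\<in>K. N v \<noteq> {}"
    using independent_insert_clique_vertex disjoint
    unfolding maximal_independent_set_def by fastforce
next
  assume nonempty: "\<forall>v\<in>K. N v \<noteq> {}"
  have "T = S" if "independent_set V E T" "S \<subseteq> T" for T
  proof -
    have "T \<inter> K = {}"
    proof (rule ccontr)
      assume "T \<inter> K \<noteq> {}"
      then obtain v where "v \<in> T" "v \<in> K" by blast
      with nonempty that show False
        unfolding independent_set_def neighbours_in_def by blast
    qed
    with that V_eq show ?thesis unfolding independent_set_def by blast
  qed
  with independent_S show "maximal_independent_set V E S"
    unfolding maximal_independent_set_def by blast
qed

lemma well_covered_iff_neighbours:
  assumes "K \<noteq> {}"
  shows "well_covered V E \<longleftrightarrow> (\<forall>v\<in>K. card (N v) = 1) \<or> (\<forall>v\<in>K. N v = {})"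
proof
  assume wc: "well_covered V E"
  show "(\<forall>v\<in>K. card (N v) = 1) \<or> (\<forall>v\<in>K. N v = {})"
  proof (cases "\<forall>v\<in>K. N v \<noteq> {}")
    case True
    have "card (N v) = 1" if "v \<in> K" for v
    proof -
      have "card (insert v (S - N v)) = card S"
        using wc that True maximal_S_iff maximal_insert_clique_vertex
        unfolding well_covered_def by blast
      then show ?thesis using card_insert_clique_vertex[OF that] by simp
    qed
    then show ?thesis by blast
  next
    case False
    then obtain w where w: "w \<in> K" "N w = {}" by blast
    have "card (N v) = 0" if "v \<in> K" for v
    proof -
      have "card (insert v (S - N v)) = card (insert w (S - N w))"
        using wc that w(1) maximal_insert_clique_vertex unfolding well_covered_def by blast
      then show ?thesis
        using card_insert_clique_vertex[OF that] card_insert_clique_vertex[OF w(1)] w(2) by simp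
    qed
    then show ?thesis
      using finite_S by (simp add: neighbours_in_def)
  qed
next
  assume "(\<forall>v\<in>K. card (N v) = 1) \<or> (\<forall>v\<in>K. N v = {})"
  then obtain c where "\<And>I. maximal_independent_set V E I \<Longrightarrow> card I = c"
  proof
    assume one: "\<forall>v\<in>K. card (N v) = 1"
    show thesis
    proof (rule that[of "card S"])
      fix I assume "maximal_independent_set V E I"
      then show "card I = card S"
        using maximal_independent_set_cases card_insert_clique_vertex one by fastforce
    qed
  next
    assume empty: "\<forall>v\<in>K. N v = {}"
    then have S_not_maximal: "\<not> maximal_independent_set V E S"
      using assms maximal_S_iff by blast
    show thesis
    proof (rule that[of "card S + 1"])
      fix I assume "maximal_independent_set V E I"
      then show "card I = card S + 1"
        using maximal_independent_set_cases card_insert_clique_vertex empty S_not_maximal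
        by fastforce
    qed
  qed
  then show "well_covered V E" unfolding well_covered_def by metis
qed

lemma well_covered_iff_degrees:
  assumes "K \<noteq> {}"
  shows "well_covered V E \<longleftrightarrow>
    ((\<forall>v\<in>K. degree V E v = card K) \<and> (\<Sum>v\<in>S. degree V E v) = card K) \<or>
    ((\<forall>v\<in>K. degree V E v = card K - 1) \<and> (\<forall>v\<in>S. degree V E v = 0))"
proof -
  have K_pos: "card K > 0" using assms finite_K by (simp add: card_gt_0_iff)
  have "(\<forall>v\<in>K. degree V E v = card K) \<longleftrightarrow> (\<forall>v\<in>K. card (N v) = 1)"
    using K_pos by (auto simp: degree_clique)
  moreover have "(\<forall>v\<in>K. card (N v) = 1) \<Longrightarrow> (\<Sum>v\<in>S. degree V E v) = card K"
    by (simp add: sum_degree_independent)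
  moreover have "(\<forall>v\<in>K. degree V E v = card K - 1) \<longleftrightarrow> (\<forall>v\<in>K. N v = {})"
    using finite_S by (simp add: degree_clique neighbours_in_def)
  moreover have "(\<forall>v\<in>K. N v = {}) \<Longrightarrow> (\<forall>s\<in>S. degree V E s = 0)"
    using E_sym finite_K by (auto simp: degree_independent neighbours_in_def)
  ultimately show ?thesis
    using well_covered_iff_neighbours[OF assms] by blast
qed

end

theorem lemma4:
  fixes V :: "'a set" and E :: "'a \<Rightarrow> 'a \<Rightarrow> bool"
  assumes "simple_graph V E" and "V \<noteq> {}"
  shows "well_covered_11 V E \<longleftrightarrow>
    (\<exists>k::nat. \<exists>S K. k > 0 \<and> partition_11 V E S K \<and> card K = k \<and>
       (((\<forall>v\<in>K. degree V E v = k) \<and> (\<Sum>v\<in>S. degree V E v) = k) \<or>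
        ((\<forall>v\<in>K. degree V E v = k - 1) \<and> (\<forall>v\<in>S. degree V E v = 0))))"
proof
  assume "well_covered_11 V E"
  then obtain S K where p: "partition_11 V E S K" and K: "K \<noteq> {}" and "well_covered V E"
    using partition_11_nonempty_clique assms(2)
    unfolding well_covered_11_def has_11_partition_def by metis
  interpret split_graph V E S K using assms(1) p by unfold_locales
  have "card K > 0" using K finite_K by (simp add: card_gt_0_iff)
  with p show "\<exists>k S K. k > 0 \<and> partition_11 V E S K \<and> card K = k \<and>
       (((\<forall>v\<in>K. degree V E v = k) \<and> (\<Sum>v\<in>S. degree V E v) = k) \<or>
        ((\<forall>v\<in>K. degree V E v = k - 1) \<and> (\<forall>v\<in>S. degree V E v = 0)))"
    using well_covered_iff_degrees[OF K] \<open>well_covered V E\<close> by blast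
next
  assume "\<exists>k S K. k > 0 \<and> partition_11 V E S K \<and> card K = k \<and>
       (((\<forall>v\<in>K. degree V E v = k) \<and> (\<Sum>v\<in>S. degree V E v) = k) \<or>
        ((\<forall>v\<in>K. degree V E v = k - 1) \<and> (\<forall>v\<in>S. degree V E v = 0)))"
  then obtain S K where p: "partition_11 V E S K" and K: "K \<noteq> {}"
    and degrees: "((\<forall>v\<in>K. degree V E v = card K) \<and> (\<Sum>v\<in>S. degree V E v) = card K) \<or>
        ((\<forall>v\<in>K. degree V E v = card K - 1) \<and> (\<forall>v\<in>S. degree V E v = 0))"
    by fastforce
  interpret split_graph V E S K using assms(1) p by unfold_locales
  show "well_covered_11 V E"
    using p degrees well_covered_iff_degrees[OF K]
    unfolding well_covered_11_def has_11_partition_def by blast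
qed

end
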